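(* Let $V=\mathbb{C}x+\mathbb{C}y+\mathbb{C}z$ with the action of the Heisenberg group $H_3$ given by $e_1\cdot x=z,\ e_1\cdot y=x,\ e_1\cdot z=y$, $e_2\cdot x=x,\ e_2\cdot y=\omega y,\ e_2\cdot z=\omega^2 z$ ($\omega$ a primitive third root of unity), extended diagonally to tensor powers. For $p=[a:b:c]\in\mathbb{P}^2$ let $W_p\subset V\otimes V$ be the span of $ayz+bzy+cx^2,\ azx+bxz+cy^2,\ axy+byx+cz^2$. Then for every $p\in\mathbb{P}^2$, the space of $H_3$-invariants $(W_p\otimes V\cap V\otimes W_p)^{H_3}$ is 1-dimensional.
   Context: $H_3=\langle e_1,e_2\mid [e_1,e_2]\text{ central},\ e_1^3=e_2^3=1\rangle$ is the Heisenberg group of order 27. The intersection is taken inside $V\otimes V\otimes V$. *)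

theory Defs
  imports "HOL-Analysis.Analysis"
begin

text \<open>V = C^3 with basis x, y, z indexed by 0, 1, 2 :: 3 (integers mod 3).
  V (x) V = complex^(3 x 3), V (x) V (x) V = complex^(3 x 3 x 3), index (i,j,k).\<close>

type_synonym V1 = "complex ^ 3"
type_synonym V2 = "complex ^ (3 \<times> 3)"
type_synonym V3 = "complex ^ (3 \<times> 3 \<times> 3)"

definition wpow :: "complex \<Rightarrow> 3 \<Rightarrow> complex" where
  "wpow \<omega> i = (if i = 0 then 1 else if i = 1 then \<omega> else \<omega>^2)"

text \<open>Action of the generators on V: e1 x = z, e1 y = x, e1 z = y (basis vector i goes to i-1),
  e2 acts on basis vector i by omega^i.  Extended diagonally to V (x) V (x) V.\<close>
definition act_e1 :: "V3 \<Rightarrow> V3" where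
  "act_e1 t = (\<chi> ijk. case ijk of (i,j,k) \<Rightarrow> t $ (i+1, j+1, k+1))"

definition act_e2 :: "complex \<Rightarrow> V3 \<Rightarrow> V3" where
  "act_e2 \<omega> t = (\<chi> ijk. case ijk of (i,j,k) \<Rightarrow> wpow \<omega> i * wpow \<omega> j * wpow \<omega> k * t $ (i,j,k))"

text \<open>H_3-invariants: fixed by both generators (which generate H_3).\<close>
definition invariants :: "complex \<Rightarrow> V3 set" where
  "invariants \<omega> = {t. act_e1 t = t \<and> act_e2 \<omega> t = t}"

definition b2 :: "3 \<Rightarrow> 3 \<Rightarrow> V2" where
  "b2 i j = axis (i,j) 1"

definition W :: "complex \<Rightarrow> complex \<Rightarrow> complex \<Rightarrow> V2 set" where
  "W a b c = vec.span
     { a *s b2 1 2 + b *s b2 2 1 + c *s b2 0 0,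
       a *s b2 2 0 + b *s b2 0 2 + c *s b2 1 1,
       a *s b2 0 1 + b *s b2 1 0 + c *s b2 2 2 }"

definition tens_left :: "V2 set \<Rightarrow> V3 set" where
  "tens_left S = vec.span {(\<chi> ijk. case ijk of (i,j,k) \<Rightarrow> w $ (i,j) * v $ k) | w v. w \<in> S \<and> (v :: V1) \<in> UNIV}"

definition tens_right :: "V2 set \<Rightarrow> V3 set" where
  "tens_right S = vec.span {(\<chi> ijk. case ijk of (i,j,k) \<Rightarrow> u $ i * w $ (j,k)) | u w. (u :: V1) \<in> UNIV \<and> w \<in> S}"

end

theory Submission
  imports Defs
begin

text \<open>Invariance under \<open>e\<^sub>2\<close> kills every coordinate \<open>(i,j,k)\<close> with \<open>i + j + k \<noteq> 0\<close> in \<open>\<int>/3\<close>,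
  and invariance under \<open>e\<^sub>1\<close> makes the remaining coordinates constant on the three orbits
  \<open>{xxx, yyy, zzz}\<close>, \<open>{yzx, zxy, xyz}\<close>, \<open>{zyx, xzy, yxz}\<close>. So an invariant tensor is determined by
  its coordinates at \<open>xxx, yzx, zyx\<close>, i.e. by its slice along \<open>x\<close> in the third factor. If the tensor
  lies in \<open>W\<^sub>p \<otimes> V\<close>, that slice lies in \<open>W\<^sub>p\<close>, whose coordinates at \<open>xx, yz, zy\<close> are proportional to
  \<open>(c, a, b)\<close>. Hence the invariants are the multiples of one tensor, which indeed lies in
  \<open>W\<^sub>p \<otimes> V \<inter> V \<otimes> W\<^sub>p\<close> and is nonzero since \<open>(a, b, c) \<noteq> 0\<close>.\<close>

lemma cases_3: "((i::3) = 0 \<Longrightarrow> P) \<Longrightarrow> (i = 1 \<Longrightarrow> P) \<Longrightarrow> (i = 2 \<Longrightarrow> P) \<Longrightarrow> P"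
  using exhaust_3[of i] by auto

lemma V3_eqI: "(\<And>i j k. (s::V3) $ (i,j,k) = t $ (i,j,k)) \<Longrightarrow> s = t"
  by (metis prod_cases3 vec_eq_iff)

definition tensor_21 :: "V2 \<Rightarrow> V1 \<Rightarrow> V3" where
  "tensor_21 w v = (\<chi> ijk. case ijk of (i,j,k) \<Rightarrow> w $ (i,j) * v $ k)"

definition tensor_12 :: "V1 \<Rightarrow> V2 \<Rightarrow> V3" where
  "tensor_12 u w = (\<chi> ijk. case ijk of (i,j,k) \<Rightarrow> u $ i * w $ (j,k))"

definition slice_3 :: "3 \<Rightarrow> V3 \<Rightarrow> V2" where
  "slice_3 k t = (\<chi> ij. case ij of (i,j) \<Rightarrow> t $ (i,j,k))"

lemma subspace_tens_left: "vec.subspace (tens_left S)"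
  unfolding tens_left_def by (rule vec.subspace_span)

lemma subspace_tens_right: "vec.subspace (tens_right S)"
  unfolding tens_right_def by (rule vec.subspace_span)

lemma tensor_21_in_tens_left: "w \<in> S \<Longrightarrow> tensor_21 w v \<in> tens_left S"
  unfolding tens_left_def tensor_21_def by (rule vec.span_base) blast

lemma tensor_12_in_tens_right: "w \<in> S \<Longrightarrow> tensor_12 u w \<in> tens_right S"
  unfolding tens_right_def tensor_12_def by (rule vec.span_base) blast

lemma slice_3_tens_left:
  assumes "t \<in> tens_left S"
  shows "slice_3 k t \<in> vec.span S"
  using assms unfolding tens_left_def
proof (induct rule: vec.span_induct_alt)
  case base
  have "slice_3 k 0 = 0" by (simp add: slice_3_def vec_eq_iff)
  then show ?case by (simp add: vec.span_zero)
next
  case (step r x y)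
  then obtain w v where "x = tensor_21 w v" and "w \<in> S"
    unfolding tensor_21_def by blast
  then have "slice_3 k x = v $ k *s w"
    by (auto simp: slice_3_def tensor_21_def vec_eq_iff mult.commute)
  with \<open>w \<in> S\<close> have "slice_3 k x \<in> vec.span S"
    by (simp add: vec.span_base vec.span_scale)
  moreover have "slice_3 k (r *s x + y) = r *s slice_3 k x + slice_3 k y"
    by (auto simp: slice_3_def vec_eq_iff)
  ultimately show ?case
    using step(2) by (simp add: vec.span_add vec.span_scale)
qed

definition w_x :: "complex \<Rightarrow> complex \<Rightarrow> complex \<Rightarrow> V2" where
  "w_x a b c = a *s b2 1 2 + b *s b2 2 1 + c *s b2 0 0"

definition w_y :: "complex \<Rightarrow> complex \<Rightarrow> complex \<Rightarrow> V2" where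
  "w_y a b c = a *s b2 2 0 + b *s b2 0 2 + c *s b2 1 1"

definition w_z :: "complex \<Rightarrow> complex \<Rightarrow> complex \<Rightarrow> V2" where
  "w_z a b c = a *s b2 0 1 + b *s b2 1 0 + c *s b2 2 2"

lemma W_eq_span: "W a b c = vec.span {w_x a b c, w_y a b c, w_z a b c}"
  unfolding W_def w_x_def w_y_def w_z_def ..

lemma generators_in_W: "w_x a b c \<in> W a b c" "w_y a b c \<in> W a b c" "w_z a b c \<in> W a b c"
  unfolding W_eq_span by (auto intro: vec.span_base)

text \<open>Only \<open>w_x\<close> has nonzero coordinates at \<open>yz, zy, xx\<close>.\<close>

lemma W_coords_proportional:
  assumes "w \<in> W a b c"
  shows "\<exists>r. w $ (1,2) = r * a \<and> w $ (2,1) = r * b \<and> w $ (0,0) = r * c"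
  using assms unfolding W_eq_span
proof (induct rule: vec.span_induct_alt)
  case base
  show ?case by (auto intro: exI[of _ 0])
next
  case (step r x y)
  have "\<exists>s. x $ (1,2) = s * a \<and> x $ (2,1) = s * b \<and> x $ (0,0) = s * c"
    using step(1)
  proof (elim insertE emptyE)
    assume "x = w_x a b c"
    then show ?thesis by (intro exI[of _ 1]) (simp add: w_x_def b2_def axis_def)
  next
    assume "x = w_y a b c"
    then show ?thesis by (intro exI[of _ 0]) (simp add: w_y_def b2_def axis_def)
  next
    assume "x = w_z a b c"
    then show ?thesis by (intro exI[of _ 0]) (simp add: w_z_def b2_def axis_def)
  qed
  then obtain s where s: "x $ (1,2) = s * a \<and> x $ (2,1) = s * b \<and> x $ (0,0) = s * c"
    by blast
  obtain t where "y $ (1,2) = t * a \<and> y $ (2,1) = t * b \<and> y $ (0,0) = t * c"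
    using step(2) by blast
  with s show ?case
    by (intro exI[of _ "r * s + t"]) (simp add: algebra_simps)
qed

lemma wpow_add:
  assumes "\<omega> ^ 3 = 1"
  shows "wpow \<omega> i * wpow \<omega> j = wpow \<omega> (i + j)"
  by (rule cases_3[of i]; rule cases_3[of j])
     (use assms in \<open>simp_all add: wpow_def power_numeral_reduce mult.assoc\<close>)

lemma wpow_eq_1_iff:
  assumes "\<omega> ^ 3 = 1" and "\<omega> \<noteq> 1"
  shows "wpow \<omega> i = 1 \<longleftrightarrow> i = 0"
proof -
  have "\<omega> ^ 2 \<noteq> 1"
  proof
    assume "\<omega> ^ 2 = 1"
    then have "\<omega> ^ 3 = \<omega>" by (simp add: power3_eq_cube power2_eq_square)
    with assms show False by simp
  qed
  with assms show ?thesis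
    by (cases rule: cases_3[of i]) (simp_all add: wpow_def)
qed

lemma subspace_fixed_points:
  assumes "Vector_Spaces.linear (*s) (*s) f"
  shows "vec.subspace {t. f t = t}"
  using vec.linear_0[OF assms] vec.linear_add[OF assms] vec.linear_scale[OF assms]
  unfolding vec.subspace_def by auto

lemma linear_act_e1: "Vector_Spaces.linear (*s) (*s) act_e1"
  by unfold_locales (auto simp: act_e1_def vec_eq_iff split: prod.splits)

lemma linear_act_e2: "Vector_Spaces.linear (*s) (*s) (act_e2 \<omega>)"
  by unfold_locales (auto simp: act_e2_def vec_eq_iff algebra_simps split: prod.splits)

lemma invariants_subspace: "vec.subspace (invariants \<omega>)"
proof -
  have "invariants \<omega> = {t. act_e1 t = t} \<inter> {t. act_e2 \<omega> t = t}"
    unfolding invariants_def by blast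
  then show ?thesis
    by (simp add: vec.subspace_inter subspace_fixed_points linear_act_e1 linear_act_e2)
qed

lemma act_e1_invariant_nth:
  assumes "t \<in> invariants \<omega>"
  shows "t $ (i + 1, j + 1, k + 1) = t $ (i, j, k)"
proof -
  have "act_e1 t $ (i,j,k) = t $ (i,j,k)"
    using assms unfolding invariants_def by simp
  then show ?thesis unfolding act_e1_def by simp
qed

lemma act_e2_invariant_nth:
  assumes "\<omega> ^ 3 = 1" and "\<omega> \<noteq> 1" and "t \<in> invariants \<omega>" and "i + j + k \<noteq> 0"
  shows "t $ (i, j, k) = 0"
proof -
  have "act_e2 \<omega> t $ (i,j,k) = t $ (i,j,k)"
    using assms(3) unfolding invariants_def by simp
  then have "(wpow \<omega> (i + j + k) - 1) * t $ (i,j,k) = 0"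
    unfolding act_e2_def using wpow_add[OF assms(1)] by (simp add: algebra_simps)
  moreover have "wpow \<omega> (i + j + k) \<noteq> 1"
    using wpow_eq_1_iff[OF assms(1,2)] assms(4) by simp
  ultimately show ?thesis by simp
qed

definition inv_tensor :: "complex \<Rightarrow> complex \<Rightarrow> complex \<Rightarrow> V3" where
  "inv_tensor a b c = tensor_21 (w_x a b c) (axis 0 1) + tensor_21 (w_y a b c) (axis 1 1)
     + tensor_21 (w_z a b c) (axis 2 1)"

lemma inv_tensor_nth:
  "inv_tensor a b c $ (i,j,k) =
     (if i = j \<and> j = k then c
      else if (i,j,k) \<in> {(1,2,0), (2,0,1), (0,1,2)} then a
      else if (i,j,k) \<in> {(2,1,0), (0,2,1), (1,0,2)} then b else 0)"
  unfolding inv_tensor_def tensor_21_def w_x_def w_y_def w_z_def b2_def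
  by (rule cases_3[of i]; rule cases_3[of j]; rule cases_3[of k]) (simp_all add: axis_def)

lemma inv_tensor_eq_tensor_12:
  "inv_tensor a b c = tensor_12 (axis 0 1) (w_x a b c) + tensor_12 (axis 1 1) (w_y a b c)
     + tensor_12 (axis 2 1) (w_z a b c)"
proof (rule V3_eqI)
  fix i j k
  show "inv_tensor a b c $ (i,j,k) = (tensor_12 (axis 0 1) (w_x a b c) + tensor_12 (axis 1 1) (w_y a b c)
     + tensor_12 (axis 2 1) (w_z a b c)) $ (i,j,k)"
    unfolding inv_tensor_nth tensor_12_def w_x_def w_y_def w_z_def b2_def
    by (rule cases_3[of i]; rule cases_3[of j]; rule cases_3[of k]) (simp_all add: axis_def)
qed

lemma inv_tensor_in_tens_left: "inv_tensor a b c \<in> tens_left (W a b c)"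
  unfolding inv_tensor_def tens_left_def
  by (intro vec.span_add; fold tens_left_def; intro tensor_21_in_tens_left generators_in_W)

lemma inv_tensor_in_tens_right: "inv_tensor a b c \<in> tens_right (W a b c)"
  unfolding inv_tensor_eq_tensor_12 tens_right_def
  by (intro vec.span_add; fold tens_right_def; intro tensor_12_in_tens_right generators_in_W)

lemma inv_tensor_in_invariants:
  assumes "\<omega> ^ 3 = 1"
  shows "inv_tensor a b c \<in> invariants \<omega>"
proof -
  have "act_e1 (inv_tensor a b c) = inv_tensor a b c"
  proof (rule V3_eqI)
    fix i j k
    show "act_e1 (inv_tensor a b c) $ (i,j,k) = inv_tensor a b c $ (i,j,k)"
      unfolding act_e1_def vec_lambda_beta prod.case inv_tensor_nth
      by (rule cases_3[of i]; rule cases_3[of j]; rule cases_3[of k]) simp_all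
  qed
  moreover have "act_e2 \<omega> (inv_tensor a b c) = inv_tensor a b c"
  proof (rule V3_eqI)
    fix i j k
    have "inv_tensor a b c $ (i,j,k) \<noteq> 0 \<Longrightarrow> i + j + k = 0"
      unfolding inv_tensor_nth
      by (rule cases_3[of i]; rule cases_3[of j]; rule cases_3[of k]) simp_all
    then show "act_e2 \<omega> (inv_tensor a b c) $ (i,j,k) = inv_tensor a b c $ (i,j,k)"
      unfolding act_e2_def using wpow_add[OF assms]
      by (cases "i + j + k = 0") (auto simp: wpow_def)
  qed
  ultimately show ?thesis unfolding invariants_def by simp
qed

lemma invariant_eq_inv_tensor:
  assumes "\<omega> ^ 3 = 1" and "\<omega> \<noteq> 1" and "t \<in> invariants \<omega>"
  shows "t = inv_tensor (t $ (1,2,0)) (t $ (2,1,0)) (t $ (0,0,0))"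
proof (rule V3_eqI)
  fix i j k
  note cyclic = act_e1_invariant_nth[OF assms(3)]
  have three_eq_0: "(3::3) = 0" by simp
  have orbits: "t $ (1,1,1) = t $ (0,0,0)" "t $ (2,2,2) = t $ (1,1,1)"
    "t $ (2,0,1) = t $ (1,2,0)" "t $ (0,1,2) = t $ (2,0,1)"
    "t $ (0,2,1) = t $ (2,1,0)" "t $ (1,0,2) = t $ (0,2,1)"
    using cyclic[of 0 0 0] cyclic[of 1 1 1] cyclic[of 1 2 0] cyclic[of 2 0 1]
      cyclic[of 2 1 0] cyclic[of 0 2 1]
    by (simp_all add: three_eq_0)
  show "t $ (i,j,k) = inv_tensor (t $ (1,2,0)) (t $ (2,1,0)) (t $ (0,0,0)) $ (i,j,k)"
    unfolding inv_tensor_nth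
    by (rule cases_3[of i]; rule cases_3[of j]; rule cases_3[of k])
       (simp_all add: orbits act_e2_invariant_nth[OF assms])
qed

lemma inv_tensor_scale: "inv_tensor (r * a) (r * b) (r * c) = r *s inv_tensor a b c"
  by (rule V3_eqI) (simp add: inv_tensor_nth)

lemma inv_tensor_eq_0_iff: "inv_tensor a b c = 0 \<longleftrightarrow> (a, b, c) = (0, 0, 0)"
proof
  assume "inv_tensor a b c = 0"
  then have "inv_tensor a b c $ (1,2,0) = 0" "inv_tensor a b c $ (2,1,0) = 0"
    "inv_tensor a b c $ (0,0,0) = 0"
    by simp_all
  then show "(a, b, c) = (0, 0, 0)" unfolding inv_tensor_nth by simp
qed (auto intro: V3_eqI simp: inv_tensor_nth)

lemma invariant_intersection_eq_span:
  assumes "\<omega> ^ 3 = 1" and "\<omega> \<noteq> 1"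
  shows "tens_left (W a b c) \<inter> tens_right (W a b c) \<inter> invariants \<omega> = vec.span {inv_tensor a b c}"
    (is "?S = _")
proof
  show "?S \<subseteq> vec.span {inv_tensor a b c}"
  proof
    fix t assume t: "t \<in> ?S"
    have "slice_3 0 t \<in> W a b c"
      using slice_3_tens_left[of t "W a b c" 0] t unfolding W_eq_span vec.span_span by blast
    then obtain r where "t $ (1,2,0) = r * a" "t $ (2,1,0) = r * b" "t $ (0,0,0) = r * c"
      using W_coords_proportional[of "slice_3 0 t" a b c] by (auto simp: slice_3_def)
    with invariant_eq_inv_tensor[OF assms, of t] t have "t = r *s inv_tensor a b c"
      by (simp add: inv_tensor_scale)
    then show "t \<in> vec.span {inv_tensor a b c}"
      by (simp add: vec.span_base vec.span_scale)
  qed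
  have "vec.subspace ?S"
    by (intro vec.subspace_inter subspace_tens_left subspace_tens_right invariants_subspace)
  then show "vec.span {inv_tensor a b c} \<subseteq> ?S"
    by (intro vec.span_minimal)
       (simp_all add: inv_tensor_in_tens_left inv_tensor_in_tens_right
         inv_tensor_in_invariants[OF assms(1)])
qed

theorem mainTheorem7:
  fixes \<omega> a b c :: complex
  assumes "\<omega> ^ 3 = 1" and "\<omega> \<noteq> 1"
    and "(a, b, c) \<noteq> (0, 0, 0)"
  shows "vec.dim (tens_left (W a b c) \<inter> tens_right (W a b c) \<inter> invariants \<omega>) = 1"
proof -
  have "vec.independent {inv_tensor a b c}"
    using assms(3) by (simp add: inv_tensor_eq_0_iff vec.independent_insert vec.span_empty)
  then show ?thesis
    by (simp add: invariant_intersection_eq_span[OF assms(1,2)] vec.dim_span_eq_card_independent)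
qed

end
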